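(* Let $M$ be an infinite strongly sofic monoid and let $\Sigma = (D_i,\sigma_i)_{i\in I}$ be a strong sofic approximation of $M$. Let $A$ be a finite set and let $X \subset A^M$ be a subshift. Then $h_\Sigma(X,M) \le \log|A|$. Moreover, $h_\Sigma(X,M) = \log|A|$ if and only if $X = A^M$.
   Context: $A^M$ is the set of maps $M\to A$ with the prodiscrete topology and the shift action $(mx)(m') = x(m'm)$; a subshift is a closed $M$-invariant subset. Hamming metric on $\operatorname{Map}(D)$ (all maps $D\to D$, $D$ finite non-empty): $d_D^{\mathrm{Ham}}(f,g) = \frac{1}{|D|}|\{v : f(v)\neq g(v)\}|$. A strong sofic approximation of $M$ is a net $(D_i,\sigma_i)_{i\in I}$ over a directed set, $D_i$ non-empty finite, $\sigma_i\colon M\to\operatorname{Map}(D_i)$, with $\sigma_i(1_M)=\mathrm{Id}_{D_i}$; $\lim_i d^{\mathrm{Ham}}_{D_i}(\sigma_i(m_1m_2),\sigma_i(m_1)\sigma_i(m_2))=0$ for all $m_1,m_2$; $\lim_i d^{\mathrm{Ham}}_{D_i}(\sigma_i(m_1),\sigma_i(m_2))=1$ for distinct $m_1,m_2$; and for every finite $K\subset M$ an integer $\Delta_K\ge1$ with $|\sigma_i(k)^{-1}(v)|\le\Delta_K$ for all $i$, $k\in K$, $v\in D_i$. A monoid is strongly sofic iff it admits one. A pseudometric $\rho$ on an $M$-space $X$ is dynamically generating if for distinct $x,y$ some $m$ has $\rho(mx,my)>0$. Sofic entropy: for $X$ compact with continuous $M$-action and continuous pseudometric $\rho$, for finite non-empty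 $D$ set $\rho_2^D(\varphi,\psi) = (\frac{1}{|D|}\sum_{v}\rho(\varphi(v),\psi(v))^2)^{1/2}$, $\rho_\infty^D(\varphi,\psi)=\max_v\rho(\varphi(v),\psi(v))$ on $X^D$, with $(m\varphi)(v)=m\varphi(v)$; for finite $F\subset M$, $\delta>0$, $\sigma\colon M\to\operatorname{Map}(D)$, $\operatorname{Map}(X,M,\rho,F,\delta,\sigma)=\{\varphi\in X^D:\rho_2^D(\varphi\circ\sigma(m),m\varphi)\le\delta\ \forall m\in F\}$; $N_\varepsilon(Z,d)$ is the maximal cardinality of a subset of $Z$ with pairwise $d$-distances $\ge\varepsilon$; $h_\Sigma(X,M,\rho)=\sup_{\varepsilon>0}\inf_F\inf_{\delta>0}\limsup_i\frac{1}{|D_i|}\log N_\varepsilon(\operatorname{Map}(X,M,\rho,F,\delta,\sigma_i),\rho_\infty^{D_i})$ ($\log 0=-\infty$). For $M$ infinite strongly sofic and $\Sigma$ a strong sofic approximation, this value is the same for all dynamically generating continuous pseudometrics $\rho$, and $h_\Sigma(X,M)$ denotes it (for subshifts one may take $\rho(x,y)=0$ if $x(1_M)=y(1_M)$ and $1$ otherwise). *)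

theory Defs
  imports "HOL-Analysis.Analysis" "HOL-Library.FuncSet"
begin

definition full_shift :: "'a set \<Rightarrow> ('m \<Rightarrow> 'a) set" where
  "full_shift A = (UNIV :: 'm set) \<rightarrow>\<^sub>E A"

definition prodiscrete :: "'a set \<Rightarrow> ('m \<Rightarrow> 'a) topology" where
  "prodiscrete A = product_topology (\<lambda>_. discrete_topology A) (UNIV :: 'm set)"

definition shift :: "'m::monoid_mult \<Rightarrow> ('m \<Rightarrow> 'a) \<Rightarrow> ('m \<Rightarrow> 'a)" where
  "shift m x = (\<lambda>m'. x (m' * m))"

definition subshift :: "'a set \<Rightarrow> ('m::monoid_mult \<Rightarrow> 'a) set \<Rightarrow> bool" where
  "subshift A X \<longleftrightarrow> X \<subseteq> full_shift A \<and> closedin (prodiscrete A) X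
     \<and> (\<forall>m. \<forall>x\<in>X. shift m x \<in> X)"

definition directed_set :: "('i \<Rightarrow> 'i \<Rightarrow> bool) \<Rightarrow> bool" where
  "directed_set le \<longleftrightarrow> (\<forall>i. le i i) \<and> (\<forall>i j k. le i j \<longrightarrow> le j k \<longrightarrow> le i k)
     \<and> (\<forall>i j. \<exists>k. le i k \<and> le j k)"

text \<open>The filter of tails of the directed set (index set = the whole type 'i, nonempty).\<close>
definition net_filter :: "('i \<Rightarrow> 'i \<Rightarrow> bool) \<Rightarrow> 'i filter" where
  "net_filter le = (INF i0. principal {i. le i0 i})"

definition hamming :: "'v set \<Rightarrow> ('v \<Rightarrow> 'v) \<Rightarrow> ('v \<Rightarrow> 'v) \<Rightarrow> real" where
  "hamming D f g = real (card {v\<in>D. f v \<noteq> g v}) / real (card D)"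

definition strong_sofic_approx ::
  "('i \<Rightarrow> 'i \<Rightarrow> bool) \<Rightarrow> ('i \<Rightarrow> 'v set) \<Rightarrow> ('i \<Rightarrow> 'm::monoid_mult \<Rightarrow> 'v \<Rightarrow> 'v) \<Rightarrow> bool" where
  "strong_sofic_approx le D \<sigma> \<longleftrightarrow>
     directed_set le \<and>
     (\<forall>i. finite (D i) \<and> D i \<noteq> {}) \<and>
     (\<forall>i m. \<sigma> i m ` D i \<subseteq> D i) \<and>
     (\<forall>i. \<forall>v\<in>D i. \<sigma> i 1 v = v) \<and>
     (\<forall>m1 m2. ((\<lambda>i. hamming (D i) (\<sigma> i (m1 * m2)) (\<sigma> i m1 \<circ> \<sigma> i m2)) \<longlongrightarrow> 0) (net_filter le)) \<and>
     (\<forall>m1 m2. m1 \<noteq> m2 \<longrightarrow> ((\<lambda>i. hamming (D i) (\<sigma> i m1) (\<sigma> i m2)) \<longlongrightarrow> 1) (net_filter le)) \<and>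
     (\<forall>K. finite K \<longrightarrow> (\<exists>\<Delta>::nat. \<Delta> \<ge> 1 \<and>
        (\<forall>i. \<forall>k\<in>K. \<forall>v\<in>D i. card {w\<in>D i. \<sigma> i k w = v} \<le> \<Delta>)))"

text \<open>The standard dynamically generating pseudometric on a subshift.\<close>
definition rho0 :: "('m::monoid_mult \<Rightarrow> 'a) \<Rightarrow> ('m \<Rightarrow> 'a) \<Rightarrow> real" where
  "rho0 x y = (if x 1 = y 1 then 0 else 1)"

definition rho2 :: "('b \<Rightarrow> 'b \<Rightarrow> real) \<Rightarrow> 'v set \<Rightarrow> ('v \<Rightarrow> 'b) \<Rightarrow> ('v \<Rightarrow> 'b) \<Rightarrow> real" where
  "rho2 \<rho> D \<phi> \<psi> = sqrt ((\<Sum>v\<in>D. (\<rho> (\<phi> v) (\<psi> v))\<^sup>2) / real (card D))"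

definition rhoinf :: "('b \<Rightarrow> 'b \<Rightarrow> real) \<Rightarrow> 'v set \<Rightarrow> ('v \<Rightarrow> 'b) \<Rightarrow> ('v \<Rightarrow> 'b) \<Rightarrow> real" where
  "rhoinf \<rho> D \<phi> \<psi> = Max ((\<lambda>v. \<rho> (\<phi> v) (\<psi> v)) ` D)"

text \<open>Map(X,M,rho,F,delta,sigma) as a subset of X^D (extensional functions D -> X).\<close>
definition sofic_maps ::
  "('m::monoid_mult \<Rightarrow> 'a) set \<Rightarrow> 'v set \<Rightarrow> ('m \<Rightarrow> 'v \<Rightarrow> 'v) \<Rightarrow> 'm set \<Rightarrow> real \<Rightarrow> ('v \<Rightarrow> 'm \<Rightarrow> 'a) set" where
  "sofic_maps X D \<sigma> F \<delta> = {\<phi> \<in> D \<rightarrow>\<^sub>E X.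
      \<forall>m\<in>F. rho2 rho0 D (\<phi> \<circ> \<sigma> m) (\<lambda>v. shift m (\<phi> v)) \<le> \<delta>}"

definition sep_number :: "('b \<Rightarrow> 'b \<Rightarrow> real) \<Rightarrow> real \<Rightarrow> 'b set \<Rightarrow> ereal" where
  "sep_number d \<epsilon> Z = (SUP S \<in> {S. finite S \<and> S \<subseteq> Z \<and>
       (\<forall>x\<in>S. \<forall>y\<in>S. x \<noteq> y \<longrightarrow> d x y \<ge> \<epsilon>)}. ereal (real (card S)))"

definition elog :: "ereal \<Rightarrow> ereal" where
  "elog x = (if x \<le> 0 then -\<infinity> else if x = \<infinity> then \<infinity> else ereal (ln (real_of_ereal x)))"

definition sofic_entropy ::
  "('i \<Rightarrow> 'i \<Rightarrow> bool) \<Rightarrow> ('i \<Rightarrow> 'v set) \<Rightarrow> ('i \<Rightarrow> 'm::monoid_mult \<Rightarrow> 'v \<Rightarrow> 'v)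
     \<Rightarrow> ('m \<Rightarrow> 'a) set \<Rightarrow> ereal" where
  "sofic_entropy le D \<sigma> X =
     (SUP \<epsilon> \<in> {0<..}. INF F \<in> {F. finite F}. INF \<delta> \<in> {0<..}.
        Limsup (net_filter le) (\<lambda>i. ereal (1 / real (card (D i))) *
           elog (sep_number (rhoinf rho0 (D i)) \<epsilon> (sofic_maps X (D i) (\<sigma> i) F \<delta>))))"

end

theory Submission
  imports Defs
begin

text \<open>
  Two microstates that are \<open>\<epsilon>\<close>-separated for \<open>rhoinf rho0\<close> differ in their coordinates
  \<open>v \<mapsto> \<phi> v 1 \<in> A\<close>, so there are at most \<open>|A|^|D|\<close> of them, which gives \<open>h \<le> log |A|\<close>;
  for the full shift, pulling every \<open>\<omega> \<in> A^D\<close> back along \<open>\<sigma>\<close> gives exact microstates, so equality holds.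

  If \<open>X \<noteq> A^M\<close>, closedness yields a pattern \<open>p\<close> on a finite window \<open>K\<close> that occurs at the origin of
  no point of \<open>X\<close>. The coordinates of a good microstate then show \<open>p\<close> on the window
  \<open>{\<sigma> k v | k \<in> K}\<close> only where the microstate is defective, i.e. at \<open>O(|K| \<delta>\<^sup>2 |D|)\<close> sites.
  Eventually most windows are injective, and bounded fibres of \<open>\<sigma> k\<close> give a family \<open>W\<close> of pairwise
  disjoint injective windows with \<open>|W|\<close> proportional to \<open>|D|\<close>. On these the pattern appears
  independently with probability \<open>|A|^-|K|\<close>, so a Chernoff bound counts at most
  \<open>|A|^|D| 2^(|K| \<delta>\<^sup>2 |D|) (1 - 1 / (2 |A|^|K|))^|W|\<close> admissible coordinate maps, and for small \<open>\<delta>\<close>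
  the entropy drops below \<open>log |A|\<close> by a fixed amount.
\<close>

lemma net_filter_ne_bot:
  assumes "directed_set le"
  shows "net_filter le \<noteq> bot"
proof -
  have refl: "le i i" and directed: "\<exists>k. le i k \<and> le j k" for i j
    using assms by (auto simp: directed_set_def)
  have trans: "le i j \<Longrightarrow> le j k \<Longrightarrow> le i k" for i j k
    using assms by (auto simp: directed_set_def)
  have "eventually P (net_filter le) \<longleftrightarrow> (\<exists>i0. \<forall>i. le i0 i \<longrightarrow> P i)" for P
    unfolding net_filter_def
  proof (subst eventually_INF_base)
    show "\<exists>k\<in>UNIV. principal {i. le k i} \<le> inf (principal {i. le a i}) (principal {i. le b i})" for a b
      using directed[of a b] trans by (auto simp: subset_eq)
  qed (auto simp: eventually_principal)
  then show ?thesis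
    using refl by (auto simp: trivial_limit_def)
qed

lemma strong_sofic_approxD:
  assumes "strong_sofic_approx le D \<sigma>"
  shows "directed_set le" "finite (D i)" "D i \<noteq> {}" "\<sigma> i m ` D i \<subseteq> D i"
    "v \<in> D i \<Longrightarrow> \<sigma> i 1 v = v"
    "m1 \<noteq> m2 \<Longrightarrow> ((\<lambda>i. hamming (D i) (\<sigma> i m1) (\<sigma> i m2)) \<longlongrightarrow> 1) (net_filter le)"
    "finite K \<Longrightarrow> \<exists>\<Delta>. \<forall>i. \<forall>k\<in>K. \<forall>v\<in>D i. card {w\<in>D i. \<sigma> i k w = v} \<le> \<Delta>"
  using assms unfolding strong_sofic_approx_def by (simp_all, meson)

lemma card_agree_eq:
  assumes "finite D" "D \<noteq> {}"
  shows "real (card {v\<in>D. f v = g v}) = (1 - hamming D f g) * real (card D)"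
proof -
  have "{v\<in>D. f v = g v} = D - {v\<in>D. f v \<noteq> g v}"
    by blast
  then have "card {v\<in>D. f v = g v} = card D - card {v\<in>D. f v \<noteq> g v}"
    using assms(1) by (simp add: card_Diff_subset)
  moreover have "card {v\<in>D. f v \<noteq> g v} \<le> card D"
    using assms(1) by (intro card_mono) auto
  ultimately show ?thesis
    using assms by (simp add: hamming_def field_simps card_gt_0_iff of_nat_diff)
qed

lemma card_noninjective_windows_le:
  fixes \<sigma> :: "'m \<Rightarrow> 'v \<Rightarrow> 'v" and c :: real
  assumes "finite D" "finite K" "c \<ge> 0"
    and agree: "\<And>k k'. k \<in> K \<Longrightarrow> k' \<in> K \<Longrightarrow> k \<noteq> k' \<Longrightarrow> real (card {v\<in>D. \<sigma> k v = \<sigma> k' v}) \<le> c"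
  shows "real (card {v\<in>D. \<not> inj_on (\<lambda>k. \<sigma> k v) K}) \<le> real (card K * card K) * c"
proof -
  define P where "P = {(k, k'). k \<in> K \<and> k' \<in> K \<and> k \<noteq> k'}"
  let ?agree = "\<lambda>(k, k'). {v\<in>D. \<sigma> k v = \<sigma> k' v}"
  have "P \<subseteq> K \<times> K"
    by (auto simp: P_def)
  then have "finite P" and card_P: "card P \<le> card K * card K"
    using \<open>finite K\<close> card_mono[of "K \<times> K" P] by (auto simp: card_cartesian_product finite_subset)
  have "{v\<in>D. \<not> inj_on (\<lambda>k. \<sigma> k v) K} \<subseteq> (\<Union>pr\<in>P. ?agree pr)"
    by (auto simp: inj_on_def P_def)
  then have "card {v\<in>D. \<not> inj_on (\<lambda>k. \<sigma> k v) K} \<le> card (\<Union>pr\<in>P. ?agree pr)"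
    using assms(1) \<open>finite P\<close> by (intro card_mono) auto
  also have "\<dots> \<le> (\<Sum>pr\<in>P. card (?agree pr))"
    by (rule card_UN_le[OF \<open>finite P\<close>])
  finally have "real (card {v\<in>D. \<not> inj_on (\<lambda>k. \<sigma> k v) K}) \<le> (\<Sum>pr\<in>P. real (card (?agree pr)))"
    by (simp flip: of_nat_sum)
  also have "\<dots> \<le> (\<Sum>pr\<in>P. c)"
    using agree by (intro sum_mono) (auto simp: P_def)
  also have "\<dots> \<le> real (card K * card K) * c"
    using of_nat_mono[OF card_P, where 'a = real] \<open>c \<ge> 0\<close> by (simp add: mult_right_mono)
  finally show ?thesis .
qed

lemma eventually_few_noninjective_windows:
  assumes ssa: "strong_sofic_approx le D \<sigma>" and "finite K"
  shows "\<forall>\<^sub>F i in net_filter le. 2 * card {v\<in>D i. \<not> inj_on (\<lambda>k. \<sigma> i k v) K} \<le> card (D i)"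
proof -
  define c where "c = real (card K * card K)"
  define \<gamma> where "\<gamma> = 1 / (2 * c + 1)"
  have "c \<ge> 0"
    by (simp add: c_def)
  then have "\<gamma> > 0"
    by (simp add: \<gamma>_def)
  have "\<forall>\<^sub>F i in net_filter le. \<forall>k\<in>K. \<forall>k'\<in>K. k \<noteq> k' \<longrightarrow> 1 - \<gamma> < hamming (D i) (\<sigma> i k) (\<sigma> i k')"
  proof (intro eventually_ball_finite[OF \<open>finite K\<close>] ballI)
    fix k k'
    show "\<forall>\<^sub>F i in net_filter le. k \<noteq> k' \<longrightarrow> 1 - \<gamma> < hamming (D i) (\<sigma> i k) (\<sigma> i k')"
    proof (cases "k = k'")
      case False
      then have "((\<lambda>i. hamming (D i) (\<sigma> i k) (\<sigma> i k')) \<longlongrightarrow> 1) (net_filter le)"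
        by (rule strong_sofic_approxD(6)[OF ssa])
      then have "\<forall>\<^sub>F i in net_filter le. 1 - \<gamma> < hamming (D i) (\<sigma> i k) (\<sigma> i k')"
        by (rule order_tendstoD(1)) (use \<open>\<gamma> > 0\<close> in simp)
      then show ?thesis
        by (rule eventually_mono) simp
    qed simp
  qed
  then show ?thesis
  proof (rule eventually_mono)
    fix i
    assume close: "\<forall>k\<in>K. \<forall>k'\<in>K. k \<noteq> k' \<longrightarrow> 1 - \<gamma> < hamming (D i) (\<sigma> i k) (\<sigma> i k')"
    let ?n = "real (card (D i))"
    have fin: "finite (D i)" "D i \<noteq> {}"
      using strong_sofic_approxD(2,3)[OF ssa] by auto
    have "real (card {v\<in>D i. \<sigma> i k v = \<sigma> i k' v}) \<le> \<gamma> * ?n"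
      if "k \<in> K" "k' \<in> K" "k \<noteq> k'" for k k'
    proof -
      have "1 - hamming (D i) (\<sigma> i k) (\<sigma> i k') \<le> \<gamma>"
        using close that by fastforce
      then show ?thesis
        using fin by (simp add: card_agree_eq mult_right_mono)
    qed
    then have "real (card {v\<in>D i. \<not> inj_on (\<lambda>k. \<sigma> i k v) K}) \<le> c * (\<gamma> * ?n)"
      unfolding c_def using fin \<open>finite K\<close> \<open>\<gamma> > 0\<close>
      by (intro card_noninjective_windows_le) auto
    also have "\<dots> \<le> 1 / 2 * ?n"
      using \<open>c \<ge> 0\<close> by (simp add: \<gamma>_def field_simps)
    finally show "2 * card {v\<in>D i. \<not> inj_on (\<lambda>k. \<sigma> i k v) K} \<le> card (D i)"
      by linarith
  qed
qed

lemma elog_mono: "x \<le> y \<Longrightarrow> elog x \<le> elog y"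
  by (cases x; cases y) (auto simp: elog_def)

lemma elog_ereal_pos: "r > 0 \<Longrightarrow> elog (ereal r) = ereal (ln r)"
  by (simp add: elog_def)

lemma elog_ereal_power:
  assumes "n > 0" "a \<ge> 0"
  shows "ereal (1 / real n) * elog (ereal (a ^ n)) = elog (ereal a)"
proof (cases "a = 0")
  case False
  then show ?thesis
    using assms by (simp add: elog_ereal_pos ln_realpow)
qed (use assms in \<open>simp add: elog_def power_0_left\<close>)

definition log_sep_rate ::
  "'v set \<Rightarrow> ('m::monoid_mult \<Rightarrow> 'v \<Rightarrow> 'v) \<Rightarrow> ('m \<Rightarrow> 'a) set \<Rightarrow> 'm set \<Rightarrow> real \<Rightarrow> real \<Rightarrow> ereal" where
  "log_sep_rate D \<sigma> X F \<delta> \<epsilon> =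
     ereal (1 / real (card D)) * elog (sep_number (rhoinf rho0 D) \<epsilon> (sofic_maps X D \<sigma> F \<delta>))"

lemma sofic_entropy_eq:
  "sofic_entropy le D \<sigma> X = (SUP \<epsilon> \<in> {0<..}. INF F \<in> {F. finite F}. INF \<delta> \<in> {0<..}.
     Limsup (net_filter le) (\<lambda>i. log_sep_rate (D i) (\<sigma> i) X F \<delta> \<epsilon>))"
  by (simp add: sofic_entropy_def log_sep_rate_def)

lemma sofic_entropy_leI:
  assumes "\<And>\<epsilon>. \<epsilon> > 0 \<Longrightarrow> \<exists>F \<delta>. finite F \<and> \<delta> > 0 \<and>
    (\<forall>\<^sub>F i in net_filter le. log_sep_rate (D i) (\<sigma> i) X F \<delta> \<epsilon> \<le> C)"
  shows "sofic_entropy le D \<sigma> X \<le> C"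
  unfolding sofic_entropy_eq
proof (rule SUP_least)
  fix \<epsilon> :: real
  assume "\<epsilon> \<in> {0<..}"
  then obtain F \<delta> where "finite F" "\<delta> > 0"
    and "\<forall>\<^sub>F i in net_filter le. log_sep_rate (D i) (\<sigma> i) X F \<delta> \<epsilon> \<le> C"
    using assms by force
  then show "(INF F \<in> {F. finite F}. INF \<delta> \<in> {0<..}.
      Limsup (net_filter le) (\<lambda>i. log_sep_rate (D i) (\<sigma> i) X F \<delta> \<epsilon>)) \<le> C"
    by (intro INF_lower2[of F] INF_lower2[of \<delta>] Limsup_bounded) auto
qed

lemma sofic_entropy_geI:
  assumes "net_filter le \<noteq> bot" "\<epsilon> > 0"
    and "\<And>F \<delta>. finite F \<Longrightarrow> \<delta> > 0 \<Longrightarrow>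
      \<forall>\<^sub>F i in net_filter le. C \<le> log_sep_rate (D i) (\<sigma> i) X F \<delta> \<epsilon>"
  shows "C \<le> sofic_entropy le D \<sigma> X"
  unfolding sofic_entropy_eq
  by (rule SUP_upper2[of \<epsilon>]) (use assms in \<open>auto intro!: INF_greatest le_Limsup\<close>)

section \<open>Separated microstates and their coordinates\<close>

lemma rhoinf_rho0_eq:
  assumes "finite D" "D \<noteq> {}"
  shows "rhoinf rho0 D \<phi> \<psi> = (if \<exists>v\<in>D. \<phi> v 1 \<noteq> \<psi> v 1 then 1 else 0)"
proof -
  let ?R = "(\<lambda>v. rho0 (\<phi> v) (\<psi> v)) ` D"
  have fin: "finite ?R" "?R \<noteq> {}"
    using assms by auto
  show ?thesis
  proof (cases "\<exists>v\<in>D. \<phi> v 1 \<noteq> \<psi> v 1")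
    case True
    then have "1 \<le> Max ?R"
      using fin by (force simp: rho0_def)
    moreover have "Max ?R \<in> {0, 1}"
      using Max_in[OF fin] by (auto simp: rho0_def)
    ultimately show ?thesis
      using True by (auto simp: rhoinf_def)
  next
    case False
    then have "?R = {0}"
      using assms(2) by (auto simp: rho0_def)
    then show ?thesis
      using False by (simp add: rhoinf_def)
  qed
qed

lemma sep_number_le_card_coordinates:
  fixes Z :: "('v \<Rightarrow> 'm::monoid_mult \<Rightarrow> 'a) set"
  assumes "finite D" "D \<noteq> {}" "\<epsilon> > 0" "finite T"
    and coord: "\<And>\<phi>. \<phi> \<in> Z \<Longrightarrow> restrict (\<lambda>v. \<phi> v 1) D \<in> T"
  shows "sep_number (rhoinf rho0 D) \<epsilon> Z \<le> ereal (real (card T))"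
  unfolding sep_number_def
proof (rule SUP_least, clarify)
  fix S
  assume "finite S" "S \<subseteq> Z" and sep: "\<forall>x\<in>S. \<forall>y\<in>S. x \<noteq> y \<longrightarrow> \<epsilon> \<le> rhoinf rho0 D x y"
  have "inj_on (\<lambda>\<phi>. restrict (\<lambda>v. \<phi> v 1) D) S"
  proof (rule inj_onI, rule ccontr)
    fix \<phi> \<psi>
    assume "\<phi> \<in> S" "\<psi> \<in> S" "restrict (\<lambda>v. \<phi> v 1) D = restrict (\<lambda>v. \<psi> v 1) D" "\<phi> \<noteq> \<psi>"
    then have "\<phi> v 1 = \<psi> v 1" if "v \<in> D" for v
      using that by (metis restrict_apply')
    then have "rhoinf rho0 D \<phi> \<psi> = 0"
      using assms(1,2) by (simp add: rhoinf_rho0_eq)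
    then show False
      using sep \<open>\<phi> \<in> S\<close> \<open>\<psi> \<in> S\<close> \<open>\<phi> \<noteq> \<psi>\<close> \<open>\<epsilon> > 0\<close> by fastforce
  qed
  then have "card S \<le> card T"
    using coord \<open>S \<subseteq> Z\<close> \<open>finite T\<close> by (intro card_inj_on_le) auto
  then show "ereal (real (card S)) \<le> ereal (real (card T))"
    by simp
qed

lemma coordinates_sofic_maps_in_PiE:
  assumes "X \<subseteq> full_shift A" "\<phi> \<in> sofic_maps X D \<sigma> F \<delta>"
  shows "restrict (\<lambda>v. \<phi> v 1) D \<in> D \<rightarrow>\<^sub>E A"
proof -
  have "\<phi> v \<in> UNIV \<rightarrow>\<^sub>E A" if "v \<in> D" for v
    using assms that unfolding sofic_maps_def full_shift_def by blast
  then show ?thesis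
    by auto
qed

lemma sep_number_sofic_maps_le:
  assumes "finite D" "D \<noteq> {}" "finite A" "X \<subseteq> full_shift A" "\<epsilon> > 0"
  shows "sep_number (rhoinf rho0 D) \<epsilon> (sofic_maps X D \<sigma> F \<delta>) \<le> ereal (real (card A) ^ card D)"
proof -
  have "sep_number (rhoinf rho0 D) \<epsilon> (sofic_maps X D \<sigma> F \<delta>) \<le> ereal (real (card (D \<rightarrow>\<^sub>E A)))"
    using assms coordinates_sofic_maps_in_PiE[OF assms(4)]
    by (intro sep_number_le_card_coordinates) (simp_all add: finite_PiE)
  then show ?thesis
    using assms(1) by (simp add: card_PiE)
qed

definition pullback :: "('m \<Rightarrow> 'v \<Rightarrow> 'v) \<Rightarrow> 'v set \<Rightarrow> ('v \<Rightarrow> 'a) \<Rightarrow> 'v \<Rightarrow> 'm \<Rightarrow> 'a" where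
  "pullback \<sigma> D \<omega> = (\<lambda>v\<in>D. \<lambda>m. \<omega> (\<sigma> m v))"

lemma pullback_apply_1:
  "v \<in> D \<Longrightarrow> \<sigma> 1 v = v \<Longrightarrow> pullback \<sigma> D \<omega> v 1 = \<omega> v"
  by (simp add: pullback_def)

lemma pullback_in_sofic_maps_full_shift:
  assumes "\<omega> \<in> D \<rightarrow>\<^sub>E A" and into: "\<And>m. \<sigma> m ` D \<subseteq> D"
    and unit: "\<And>v. v \<in> D \<Longrightarrow> \<sigma> 1 v = v" and "\<delta> \<ge> 0"
  shows "pullback \<sigma> D \<omega> \<in> sofic_maps (full_shift A) D \<sigma> F \<delta>"
proof -
  have "pullback \<sigma> D \<omega> \<in> D \<rightarrow>\<^sub>E full_shift A"
    using assms(1) into by (auto simp: pullback_def full_shift_def)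
  moreover have "rho2 rho0 D (pullback \<sigma> D \<omega> \<circ> \<sigma> m) (\<lambda>v. shift m (pullback \<sigma> D \<omega> v)) = 0" for m
  proof -
    have "rho0 (pullback \<sigma> D \<omega> (\<sigma> m v)) (shift m (pullback \<sigma> D \<omega> v)) = 0" if "v \<in> D" for v
      using that into unit by (auto simp: rho0_def shift_def pullback_def)
    then show ?thesis
      by (simp add: rho2_def)
  qed
  ultimately show ?thesis
    using \<open>\<delta> \<ge> 0\<close> by (simp add: sofic_maps_def)
qed

lemma sep_number_sofic_maps_full_shift_ge:
  fixes \<sigma> :: "'m::monoid_mult \<Rightarrow> 'v \<Rightarrow> 'v" and A :: "'a set"
  assumes "finite D" "D \<noteq> {}" "finite A" and into: "\<And>m. \<sigma> m ` D \<subseteq> D"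
    and unit: "\<And>v. v \<in> D \<Longrightarrow> \<sigma> 1 v = v" and "\<epsilon> \<le> 1" "\<delta> \<ge> 0"
  shows "ereal (real (card A) ^ card D) \<le> sep_number (rhoinf rho0 D) \<epsilon> (sofic_maps (full_shift A) D \<sigma> F \<delta>)"
proof -
  define S where "S = pullback \<sigma> D ` (D \<rightarrow>\<^sub>E A)"
  have differ: "\<exists>v\<in>D. pullback \<sigma> D \<omega> v 1 \<noteq> pullback \<sigma> D \<omega>' v 1"
    if "\<omega> \<in> D \<rightarrow>\<^sub>E A" "\<omega>' \<in> D \<rightarrow>\<^sub>E A" "\<omega> \<noteq> \<omega>'" for \<omega> \<omega>'
    using that PiE_ext[of \<omega> D "\<lambda>_. A" \<omega>'] unit by (auto simp: pullback_apply_1)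
  then have "inj_on (pullback \<sigma> D) (D \<rightarrow>\<^sub>E A)"
    by (metis inj_onI)
  then have card_S: "card S = card A ^ card D"
    using assms(1) by (simp add: S_def card_image card_PiE)
  have "S \<subseteq> sofic_maps (full_shift A) D \<sigma> F \<delta>"
    unfolding S_def using into unit \<open>\<delta> \<ge> 0\<close> by (blast intro: pullback_in_sofic_maps_full_shift)
  moreover have "\<epsilon> \<le> rhoinf rho0 D x y" if xy: "x \<in> S" "y \<in> S" "x \<noteq> y" for x y
  proof -
    obtain \<omega> \<omega>' where "\<omega> \<in> D \<rightarrow>\<^sub>E A" "\<omega>' \<in> D \<rightarrow>\<^sub>E A" "x = pullback \<sigma> D \<omega>" "y = pullback \<sigma> D \<omega>'"
      using xy(1,2) unfolding S_def by blast
    then have "\<exists>v\<in>D. x v 1 \<noteq> y v 1"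
      using differ \<open>x \<noteq> y\<close> by blast
    then show ?thesis
      using assms(1,2,6) by (simp add: rhoinf_rho0_eq)
  qed
  ultimately have "ereal (real (card S)) \<le> sep_number (rhoinf rho0 D) \<epsilon> (sofic_maps (full_shift A) D \<sigma> F \<delta>)"
    unfolding sep_number_def using assms(1,3)
    by (intro SUP_upper) (auto simp: S_def finite_PiE)
  then show ?thesis
    by (simp add: card_S)
qed

lemma sofic_entropy_le_elog_card:
  assumes ssa: "strong_sofic_approx le D \<sigma>" and "finite A" "X \<subseteq> full_shift A"
  shows "sofic_entropy le D \<sigma> X \<le> elog (ereal (real (card A)))"
proof (rule sofic_entropy_leI)
  fix \<epsilon> :: real
  assume "\<epsilon> > 0"
  have "log_sep_rate (D i) (\<sigma> i) X {} 1 \<epsilon> \<le> elog (ereal (real (card A)))" for i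
  proof -
    have "log_sep_rate (D i) (\<sigma> i) X {} 1 \<epsilon>
        \<le> ereal (1 / real (card (D i))) * elog (ereal (real (card A) ^ card (D i)))"
      unfolding log_sep_rate_def using strong_sofic_approxD(2,3)[OF ssa] assms \<open>\<epsilon> > 0\<close>
      by (intro ereal_mult_left_mono elog_mono sep_number_sofic_maps_le) auto
    also have "\<dots> = elog (ereal (real (card A)))"
      using strong_sofic_approxD(2,3)[OF ssa] by (simp add: elog_ereal_power card_gt_0_iff)
    finally show ?thesis .
  qed
  then show "\<exists>F \<delta>. finite F \<and> \<delta> > 0 \<and>
      (\<forall>\<^sub>F i in net_filter le. log_sep_rate (D i) (\<sigma> i) X F \<delta> \<epsilon> \<le> elog (ereal (real (card A))))"
    by (intro exI[of _ "{}"] exI[of _ 1]) simp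
qed

lemma elog_card_le_sofic_entropy_full_shift:
  assumes ssa: "strong_sofic_approx le D \<sigma>" and "finite A"
  shows "elog (ereal (real (card A))) \<le> sofic_entropy le D \<sigma> (full_shift A)"
proof (rule sofic_entropy_geI)
  show "net_filter le \<noteq> bot"
    by (rule net_filter_ne_bot[OF strong_sofic_approxD(1)[OF ssa]])
  fix F \<delta>
  assume "\<delta> > (0::real)"
  have "elog (ereal (real (card A))) \<le> log_sep_rate (D i) (\<sigma> i) (full_shift A) F \<delta> 1" for i
  proof -
    have "elog (ereal (real (card A)))
        = ereal (1 / real (card (D i))) * elog (ereal (real (card A) ^ card (D i)))"
      using strong_sofic_approxD(2,3)[OF ssa] by (simp add: elog_ereal_power card_gt_0_iff)
    also have "\<dots> \<le> log_sep_rate (D i) (\<sigma> i) (full_shift A) F \<delta> 1"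
      unfolding log_sep_rate_def using strong_sofic_approxD(2-5)[OF ssa] assms \<open>\<delta> > 0\<close>
      by (intro ereal_mult_left_mono elog_mono sep_number_sofic_maps_full_shift_ge) auto
    finally show ?thesis .
  qed
  then show "\<forall>\<^sub>F i in net_filter le. elog (ereal (real (card A))) \<le> log_sep_rate (D i) (\<sigma> i) (full_shift A) F \<delta> 1"
    by simp
qed simp

section \<open>Configurations that rarely show a pattern\<close>

lemma sum_PiE_power_hits:
  fixes t :: real
  assumes "finite B" "finite W" "p \<in> B"
  shows "(\<Sum>P\<in>W \<rightarrow>\<^sub>E B. t ^ card {w\<in>W. P w = p}) = (real (card B) - 1 + t) ^ card W"
proof -
  have "t ^ card {w\<in>W. P w = p} = (\<Prod>w\<in>W. if P w = p then t else 1)" for P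
    using assms(2) by (simp add: prod.If_cases Int_def)
  then have "(\<Sum>P\<in>W \<rightarrow>\<^sub>E B. t ^ card {w\<in>W. P w = p}) = (\<Prod>w\<in>W. \<Sum>y\<in>B. if y = p then t else 1)"
    using prod_sum_PiE[of W "\<lambda>_. B" "\<lambda>_ y. if y = p then t else 1"] assms by simp
  also have "(\<Sum>y\<in>B. if y = p then t else 1) = t + (real (card B) - 1)"
  proof -
    have "card B \<ge> 1"
      using assms card_gt_0_iff[of B] by auto
    then show ?thesis
      using assms by (simp add: sum.remove[of B p] card_Diff_singleton of_nat_diff)
  qed
  finally show ?thesis
    by (simp add: add.commute)
qed

text \<open>Markov's inequality for the weight \<open>t ^ (number of hits)\<close>, as in the proof of Chernoff's bound.\<close>
lemma card_PiE_few_hits_le: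
  fixes t r :: real
  assumes "finite B" "finite W" "p \<in> B" "0 < t" "t \<le> 1"
  shows "real (card {P \<in> W \<rightarrow>\<^sub>E B. real (card {w\<in>W. P w = p}) \<le> r})
    \<le> (1 / t) powr r * (real (card B) - 1 + t) ^ card W"
proof -
  let ?S = "{P \<in> W \<rightarrow>\<^sub>E B. real (card {w\<in>W. P w = p}) \<le> r}"
  have fin: "finite (W \<rightarrow>\<^sub>E B)"
    using assms by (simp add: finite_PiE)
  have hit_weight: "1 \<le> (1 / t) powr r * t ^ card {w\<in>W. P w = p}" if "P \<in> ?S" for P
  proof -
    have "t powr r \<le> t powr real (card {w\<in>W. P w = p})"
      using that assms by (intro powr_mono') auto
    then show ?thesis
      using assms by (simp add: powr_divide powr_realpow divide_simps)
  qed
  have "real (card ?S) = (\<Sum>P\<in>?S. 1)"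
    by simp
  also have "\<dots> \<le> (\<Sum>P\<in>?S. (1 / t) powr r * t ^ card {w\<in>W. P w = p})"
    using hit_weight by (rule sum_mono)
  also have "\<dots> \<le> (\<Sum>P\<in>W \<rightarrow>\<^sub>E B. (1 / t) powr r * t ^ card {w\<in>W. P w = p})"
    using fin assms by (intro sum_mono2) auto
  also have "\<dots> = (1 / t) powr r * (real (card B) - 1 + t) ^ card W"
    using assms by (simp add: sum_distrib_left[symmetric] sum_PiE_power_hits)
  finally show ?thesis .
qed

lemma card_PiE_le_card_windows:
  fixes s :: "'m \<Rightarrow> 'v \<Rightarrow> 'v" and Q :: "('v \<Rightarrow> 'm \<Rightarrow> 'a) \<Rightarrow> bool"
  assumes "finite D" "finite A" "finite K" "finite W"
    and into: "\<And>w k. w \<in> W \<Longrightarrow> k \<in> K \<Longrightarrow> s k w \<in> D"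
  shows "card {\<omega> \<in> D \<rightarrow>\<^sub>E A. Q (\<lambda>w\<in>W. \<lambda>k\<in>K. \<omega> (s k w))}
    \<le> card (D - (\<Union>w\<in>W. (\<lambda>k. s k w) ` K) \<rightarrow>\<^sub>E A) * card {P \<in> W \<rightarrow>\<^sub>E (K \<rightarrow>\<^sub>E A). Q P}"
proof -
  define U where "U = (\<Union>w\<in>W. (\<lambda>k. s k w) ` K)"
  define windows where "windows \<omega> = (\<lambda>w\<in>W. \<lambda>k\<in>K. \<omega> (s k w))" for \<omega> :: "'v \<Rightarrow> 'a"
  define split where "split \<omega> = (restrict \<omega> (D - U), windows \<omega>)" for \<omega> :: "'v \<Rightarrow> 'a"
  let ?G = "{\<omega> \<in> D \<rightarrow>\<^sub>E A. Q (windows \<omega>)}"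
  let ?T = "{P \<in> W \<rightarrow>\<^sub>E (K \<rightarrow>\<^sub>E A). Q P}"
  have "inj_on split ?G"
  proof (rule inj_onI)
    fix \<omega> \<omega>'
    assume "\<omega> \<in> ?G" "\<omega>' \<in> ?G" and "split \<omega> = split \<omega>'"
    then have outside: "restrict \<omega> (D - U) = restrict \<omega>' (D - U)"
      and inside: "windows \<omega> = windows \<omega>'"
      by (simp_all add: split_def)
    have "\<omega> x = \<omega>' x" if "x \<in> U" for x
    proof -
      obtain w k where "w \<in> W" "k \<in> K" "x = s k w"
        using \<open>x \<in> U\<close> unfolding U_def by blast
      then show ?thesis
        using fun_cong[OF fun_cong[OF inside, of w], of k] by (simp add: windows_def)
    qed
    moreover have "\<omega> x = \<omega>' x" if "x \<in> D - U" for x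
      using fun_cong[OF outside, of x] that by simp
    ultimately show "\<omega> = \<omega>'"
      using \<open>\<omega> \<in> ?G\<close> \<open>\<omega>' \<in> ?G\<close> by (metis (no_types, lifting) Diff_iff PiE_ext mem_Collect_eq)
  qed
  moreover have "split ` ?G \<subseteq> (D - U \<rightarrow>\<^sub>E A) \<times> ?T"
  proof (rule image_subsetI)
    fix \<omega>
    assume "\<omega> \<in> ?G"
    moreover from this have "windows \<omega> \<in> W \<rightarrow>\<^sub>E (K \<rightarrow>\<^sub>E A)"
      using into by (auto simp: windows_def)
    ultimately show "split \<omega> \<in> (D - U \<rightarrow>\<^sub>E A) \<times> ?T"
      by (auto simp: split_def)
  qed
  moreover have "finite ((D - U \<rightarrow>\<^sub>E A) \<times> ?T)"
    using assms by (simp add: finite_PiE)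
  ultimately have "card ?G \<le> card ((D - U \<rightarrow>\<^sub>E A) \<times> ?T)"
    by (rule card_inj_on_le)
  then show ?thesis
    by (simp add: U_def windows_def card_cartesian_product)
qed

lemma card_PiE_few_pattern_hits_le:
  fixes s :: "'m \<Rightarrow> 'v \<Rightarrow> 'v" and p :: "'m \<Rightarrow> 'a" and t r :: real
  assumes "finite D" "finite A" "finite K" "W \<subseteq> D"
    and into: "\<And>w k. w \<in> W \<Longrightarrow> k \<in> K \<Longrightarrow> s k w \<in> D"
    and inj: "\<And>w. w \<in> W \<Longrightarrow> inj_on (\<lambda>k. s k w) K"
    and disj: "disjoint_family_on (\<lambda>w. (\<lambda>k. s k w) ` K) W"
    and "p \<in> K \<rightarrow>\<^sub>E A" "0 < t" "t \<le> 1"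
  shows "real (card {\<omega> \<in> D \<rightarrow>\<^sub>E A. real (card {w\<in>W. (\<lambda>k\<in>K. \<omega> (s k w)) = p}) \<le> r})
    \<le> real (card A) ^ card D * (1 / t) powr r * (1 - (1 - t) / real (card A) ^ card K) ^ card W"
proof -
  define U where "U = (\<Union>w\<in>W. (\<lambda>k. s k w) ` K)"
  define a where "a = real (card A)"
  define b where "b = a ^ card K"
  have "finite W"
    using assms finite_subset by blast
  have "U \<subseteq> D"
    using into by (auto simp: U_def)
  have card_U: "card U = card W * card K"
    unfolding U_def using \<open>finite W\<close> assms(3) disj inj
    by (simp add: card_UN_disjoint' card_image)
  have "b = real (card (K \<rightarrow>\<^sub>E A))"
    using assms(3) by (simp add: a_def b_def card_PiE)
  moreover have "K \<rightarrow>\<^sub>E A \<noteq> {}"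
    using \<open>p \<in> K \<rightarrow>\<^sub>E A\<close> by blast
  ultimately have "b > 0"
    using assms(2,3) by (simp add: finite_PiE card_gt_0_iff)
  \<comment> \<open>Disjoint injective windows make the window contents independent of each other and of the
     coordinates outside \<open>U\<close>.\<close>
  have "card {\<omega> \<in> D \<rightarrow>\<^sub>E A. real (card {w\<in>W. (\<lambda>k\<in>K. \<omega> (s k w)) = p}) \<le> r}
      \<le> card (D - U \<rightarrow>\<^sub>E A) * card {P \<in> W \<rightarrow>\<^sub>E (K \<rightarrow>\<^sub>E A). real (card {w\<in>W. P w = p}) \<le> r}"
    using card_PiE_le_card_windows[OF assms(1-3) \<open>finite W\<close> into,
        where Q = "\<lambda>P. real (card {w\<in>W. P w = p}) \<le> r"]
    by (simp add: U_def cong: conj_cong)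
  then have "real (card {\<omega> \<in> D \<rightarrow>\<^sub>E A. real (card {w\<in>W. (\<lambda>k\<in>K. \<omega> (s k w)) = p}) \<le> r})
      \<le> a ^ (card D - card U) * real (card {P \<in> W \<rightarrow>\<^sub>E (K \<rightarrow>\<^sub>E A). real (card {w\<in>W. P w = p}) \<le> r})"
    using assms \<open>U \<subseteq> D\<close>
    by (simp add: a_def card_PiE card_Diff_subset finite_subset flip: of_nat_mult of_nat_power)
  also have "\<dots> \<le> a ^ (card D - card U) * ((1 / t) powr r * (b - 1 + t) ^ card W)"
    using card_PiE_few_hits_le[of "K \<rightarrow>\<^sub>E A" W p t r] assms \<open>finite W\<close>
    by (intro mult_left_mono) (simp_all add: finite_PiE card_PiE a_def b_def)
  also have "(b - 1 + t) ^ card W = a ^ card U * (1 - (1 - t) / b) ^ card W"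
  proof -
    have "b - 1 + t = b * (1 - (1 - t) / b)"
      using \<open>b > 0\<close> by (simp add: field_simps)
    then show ?thesis
      by (simp add: card_U b_def power_mult_distrib power_mult mult.commute)
  qed
  also have "a ^ (card D - card U) * ((1 / t) powr r * (a ^ card U * (1 - (1 - t) / b) ^ card W))
      = a ^ (card D - card U + card U) * (1 / t) powr r * (1 - (1 - t) / b) ^ card W"
    by (simp add: power_add)
  also have "card D - card U + card U = card D"
    using card_mono[OF assms(1) \<open>U \<subseteq> D\<close>] by simp
  finally show ?thesis
    by (simp only: a_def b_def)
qed

lemma exists_independent_subset:
  fixes G :: "'v set" and R :: "'v \<Rightarrow> 'v \<Rightarrow> bool"
  assumes "finite G" and deg: "\<And>v. v \<in> G \<Longrightarrow> card {w\<in>G. R v w} \<le> d"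
    and sym: "\<And>v w. R v w \<Longrightarrow> R w v"
  shows "\<exists>W\<subseteq>G. (\<forall>w\<in>W. \<forall>w'\<in>W. w \<noteq> w' \<longrightarrow> \<not> R w w') \<and> card G \<le> (d + 1) * card W"
proof -
  define indep where "indep W \<longleftrightarrow> W \<subseteq> G \<and> (\<forall>w\<in>W. \<forall>w'\<in>W. w \<noteq> w' \<longrightarrow> \<not> R w w')" for W
  have "\<forall>W. indep W \<longrightarrow> card W < card G + 1"
    using \<open>finite G\<close> card_mono unfolding indep_def by fastforce
  moreover have "indep {}"
    by (simp add: indep_def)
  ultimately obtain W where W: "indep W" and maximal: "\<And>W'. indep W' \<Longrightarrow> card W' \<le> card W"
    using ex_has_greatest_nat[of indep "{}" card "card G + 1"] by blast
  have "finite W"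
    using W \<open>finite G\<close> finite_subset unfolding indep_def by blast
  have cover: "G \<subseteq> W \<union> (\<Union>w\<in>W. {g\<in>G. R w g})"
  proof
    fix g
    assume "g \<in> G"
    show "g \<in> W \<union> (\<Union>w\<in>W. {g\<in>G. R w g})"
    proof (rule ccontr)
      assume g: "g \<notin> W \<union> (\<Union>w\<in>W. {g\<in>G. R w g})"
      then have "\<forall>w\<in>W. \<not> R w g \<and> \<not> R g w"
        using \<open>g \<in> G\<close> sym by blast
      then have "indep (insert g W)"
        using W \<open>g \<in> G\<close> unfolding indep_def by auto
      then have "card (insert g W) \<le> card W"
        by (rule maximal)
      then show False
        using g \<open>finite W\<close> by simp
    qed
  qed
  have "card G \<le> card (W \<union> (\<Union>w\<in>W. {g\<in>G. R w g}))"
    using \<open>finite G\<close> \<open>finite W\<close> by (intro card_mono[OF _ cover]) auto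
  also have "\<dots> \<le> card W + card (\<Union>w\<in>W. {g\<in>G. R w g})"
    by (rule card_Un_le)
  also have "\<dots> \<le> card W + (\<Sum>w\<in>W. card {g\<in>G. R w g})"
    using card_UN_le[OF \<open>finite W\<close>] by simp
  also have "\<dots> \<le> card W + (\<Sum>w\<in>W. d)"
    using W deg unfolding indep_def by (intro add_left_mono sum_mono) blast
  also have "\<dots> = (d + 1) * card W"
    by simp
  finally have "card G \<le> (d + 1) * card W" .
  with W show ?thesis
    unfolding indep_def by (intro exI[of _ W]) simp
qed

lemma card_meeting_windows_le:
  fixes \<sigma> :: "'m \<Rightarrow> 'v \<Rightarrow> 'v"
  assumes "finite D" "finite K" and into: "\<And>k. k \<in> K \<Longrightarrow> \<sigma> k v \<in> D"
    and fibres: "\<forall>k\<in>K. \<forall>u\<in>D. card {w\<in>D. \<sigma> k w = u} \<le> \<Delta>"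
  shows "card {w\<in>D. (\<lambda>k. \<sigma> k v) ` K \<inter> (\<lambda>k. \<sigma> k w) ` K \<noteq> {}} \<le> card K * card K * \<Delta>"
proof -
  have "{w\<in>D. (\<lambda>k. \<sigma> k v) ` K \<inter> (\<lambda>k. \<sigma> k w) ` K \<noteq> {}}
      \<subseteq> (\<Union>k\<in>K. \<Union>k'\<in>K. {w\<in>D. \<sigma> k' w = \<sigma> k v})"
    by force
  then have "card {w\<in>D. (\<lambda>k. \<sigma> k v) ` K \<inter> (\<lambda>k. \<sigma> k w) ` K \<noteq> {}}
      \<le> card (\<Union>k\<in>K. \<Union>k'\<in>K. {w\<in>D. \<sigma> k' w = \<sigma> k v})"
    using assms(1,2) by (intro card_mono) auto
  also have "\<dots> \<le> (\<Sum>k\<in>K. \<Sum>k'\<in>K. card {w\<in>D. \<sigma> k' w = \<sigma> k v})"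
    using assms(2) by (intro order_trans[OF card_UN_le] sum_mono card_UN_le) auto
  also have "\<dots> \<le> (\<Sum>k\<in>K. \<Sum>k'\<in>K. \<Delta>)"
    using fibres into by (intro sum_mono) blast
  finally show ?thesis
    by simp
qed

lemma exists_disjoint_injective_windows:
  fixes \<sigma> :: "'m \<Rightarrow> 'v \<Rightarrow> 'v"
  assumes "finite D" "finite K" and into: "\<And>m. \<sigma> m ` D \<subseteq> D"
    and fibres: "\<forall>k\<in>K. \<forall>v\<in>D. card {w\<in>D. \<sigma> k w = v} \<le> \<Delta>"
    and few_noninjective: "2 * card {v\<in>D. \<not> inj_on (\<lambda>k. \<sigma> k v) K} \<le> card D"
  shows "\<exists>W\<subseteq>D. (\<forall>w\<in>W. inj_on (\<lambda>k. \<sigma> k w) K) \<and> disjoint_family_on (\<lambda>w. (\<lambda>k. \<sigma> k w) ` K) W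
    \<and> card D \<le> 2 * (card K * card K * \<Delta> + 1) * card W"
proof -
  define Good where "Good = {v\<in>D. inj_on (\<lambda>k. \<sigma> k v) K}"
  define R where "R v w \<longleftrightarrow> (\<lambda>k. \<sigma> k v) ` K \<inter> (\<lambda>k. \<sigma> k w) ` K \<noteq> {}" for v w
  have "finite Good" "Good \<subseteq> D"
    using assms(1) by (auto simp: Good_def)
  have "card D \<le> card (Good \<union> {v\<in>D. \<not> inj_on (\<lambda>k. \<sigma> k v) K})"
    using assms(1) by (intro card_mono) (auto simp: Good_def)
  also have "\<dots> \<le> card Good + card {v\<in>D. \<not> inj_on (\<lambda>k. \<sigma> k v) K}"
    by (rule card_Un_le)
  finally have card_Good: "card D \<le> 2 * card Good"
    using few_noninjective by linarith
  have degree: "card {w\<in>Good. R v w} \<le> card K * card K * \<Delta>" if "v \<in> Good" for v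
  proof -
    have "card {w\<in>Good. R v w} \<le> card {w\<in>D. R v w}"
      using assms(1) \<open>Good \<subseteq> D\<close> by (intro card_mono) auto
    also have "\<dots> \<le> card K * card K * \<Delta>"
      unfolding R_def using assms(1,2) fibres into that \<open>Good \<subseteq> D\<close>
      by (intro card_meeting_windows_le) (auto simp: image_subset_iff)
    finally show ?thesis .
  qed
  have symmetric: "R v w \<Longrightarrow> R w v" for v w
    by (auto simp: R_def)
  obtain W where "W \<subseteq> Good" and indep: "\<forall>w\<in>W. \<forall>w'\<in>W. w \<noteq> w' \<longrightarrow> \<not> R w w'"
    and card_W: "card Good \<le> (card K * card K * \<Delta> + 1) * card W"
    using exists_independent_subset[where R = R and d = "card K * card K * \<Delta>",
        OF \<open>finite Good\<close> degree symmetric]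
    by blast
  have "disjoint_family_on (\<lambda>w. (\<lambda>k. \<sigma> k w) ` K) W"
    using indep unfolding disjoint_family_on_def R_def by blast
  moreover have "card D \<le> 2 * (card K * card K * \<Delta> + 1) * card W"
    using card_Good card_W by linarith
  moreover have "W \<subseteq> D" "\<forall>w\<in>W. inj_on (\<lambda>k. \<sigma> k w) K"
    using \<open>W \<subseteq> Good\<close> by (auto simp: Good_def)
  ultimately show ?thesis
    by blast
qed

section \<open>Forbidden patterns lower the entropy\<close>

lemma exists_forbidden_pattern:
  assumes "closedin (prodiscrete A) X" "X \<subseteq> full_shift A" "x0 \<in> full_shift A" "x0 \<notin> X"
  shows "\<exists>K. finite K \<and> (\<forall>x\<in>X. restrict x K \<noteq> restrict x0 K)"
proof -
  have "topspace (prodiscrete A) = full_shift A"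
    by (simp add: prodiscrete_def full_shift_def)
  then have "openin (prodiscrete A) (full_shift A - X)"
    using assms(1) by (metis closedin_def)
  then obtain U where fin: "finite {i \<in> UNIV. U i \<noteq> topspace (discrete_topology A)}"
    and "x0 \<in> Pi\<^sub>E UNIV U" and basic: "Pi\<^sub>E UNIV U \<subseteq> full_shift A - X"
    using assms(3,4) unfolding prodiscrete_def openin_product_topology_alt by blast
  define K where "K = {i. U i \<noteq> A}"
  have "x \<notin> X" if "restrict x K = restrict x0 K" "x \<in> full_shift A" for x
  proof -
    have "x i \<in> U i" for i
    proof (cases "i \<in> K")
      case True
      then have "x i = x0 i"
        using fun_cong[OF that(1), of i] by simp
      then show ?thesis
        using \<open>x0 \<in> Pi\<^sub>E UNIV U\<close> by auto
    next
      case False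
      then have "U i = A"
        by (simp add: K_def)
      then show ?thesis
        using \<open>x \<in> full_shift A\<close> by (auto simp: full_shift_def)
    qed
    then show ?thesis
      using basic by auto
  qed
  moreover have "finite K"
    using fin by (simp add: K_def)
  ultimately show ?thesis
    using assms(2) by blast
qed

lemma card_defects_le:
  assumes "finite D" "D \<noteq> {}" "\<phi> \<in> sofic_maps X D \<sigma> F \<delta>" "k \<in> F"
  shows "real (card {v\<in>D. \<phi> (\<sigma> k v) 1 \<noteq> \<phi> v k}) \<le> \<delta>\<^sup>2 * real (card D)"
proof -
  have "(rho0 ((\<phi> \<circ> \<sigma> k) v) (shift k (\<phi> v)))\<^sup>2 = (if \<phi> (\<sigma> k v) 1 \<noteq> \<phi> v k then 1 else 0)" for v
    by (simp add: rho0_def shift_def)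
  then have "(\<Sum>v\<in>D. (rho0 ((\<phi> \<circ> \<sigma> k) v) (shift k (\<phi> v)))\<^sup>2) = real (card {v\<in>D. \<phi> (\<sigma> k v) 1 \<noteq> \<phi> v k})"
    using sum.inter_filter[OF assms(1), of "\<lambda>_. 1::real"] by simp
  moreover have "rho2 rho0 D (\<phi> \<circ> \<sigma> k) (\<lambda>v. shift k (\<phi> v)) \<le> \<delta>"
    using assms(3,4) by (simp add: sofic_maps_def)
  ultimately have "real (card {v\<in>D. \<phi> (\<sigma> k v) 1 \<noteq> \<phi> v k}) / real (card D) \<le> \<delta>\<^sup>2"
    unfolding rho2_def by (metis real_sqrt_le_iff real_sqrt_abs abs_le_square_iff sqrt_le_D)
  then show ?thesis
    using assms(1,2) by (simp add: divide_le_eq card_gt_0_iff)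
qed

lemma card_pattern_hits_le:
  fixes \<phi> :: "'v \<Rightarrow> 'm::monoid_mult \<Rightarrow> 'a"
  assumes "finite D" "D \<noteq> {}" "finite K" "W \<subseteq> D" and into: "\<And>m. \<sigma> m ` D \<subseteq> D"
    and forbidden: "\<forall>x\<in>X. restrict x K \<noteq> p" and \<phi>: "\<phi> \<in> sofic_maps X D \<sigma> K \<delta>"
  shows "real (card {w\<in>W. (\<lambda>k\<in>K. restrict (\<lambda>v. \<phi> v 1) D (\<sigma> k w)) = p})
    \<le> real (card K) * \<delta>\<^sup>2 * real (card D)"
proof -
  let ?hits = "{w\<in>W. (\<lambda>k\<in>K. restrict (\<lambda>v. \<phi> v 1) D (\<sigma> k w)) = p}"
  let ?defects = "\<lambda>k. {v\<in>D. \<phi> (\<sigma> k v) 1 \<noteq> \<phi> v k}"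
  have "?hits \<subseteq> (\<Union>k\<in>K. ?defects k)"
  proof
    fix w
    assume "w \<in> ?hits"
    then have "w \<in> D"
      using \<open>W \<subseteq> D\<close> by blast
    then have "\<sigma> k w \<in> D" for k
      using into by blast
    then have hit: "(\<lambda>k\<in>K. \<phi> (\<sigma> k w) 1) = p"
      using \<open>w \<in> ?hits\<close> by simp
    moreover have "\<phi> w \<in> X"
      using \<phi> \<open>w \<in> D\<close> by (auto simp: sofic_maps_def)
    ultimately have "restrict (\<phi> w) K \<noteq> (\<lambda>k\<in>K. \<phi> (\<sigma> k w) 1)"
      using forbidden by simp
    then obtain k where "k \<in> K" "\<phi> (\<sigma> k w) 1 \<noteq> \<phi> w k"
      using restrict_ext[of K "\<phi> w" "\<lambda>k. \<phi> (\<sigma> k w) 1"] by force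
    then show "w \<in> (\<Union>k\<in>K. ?defects k)"
      using \<open>w \<in> D\<close> by blast
  qed
  then have "card ?hits \<le> card (\<Union>k\<in>K. ?defects k)"
    using assms(1,3) by (intro card_mono) auto
  also have "\<dots> \<le> (\<Sum>k\<in>K. card (?defects k))"
    by (rule card_UN_le[OF \<open>finite K\<close>])
  finally have "real (card ?hits) \<le> (\<Sum>k\<in>K. real (card (?defects k)))"
    by (simp flip: of_nat_sum)
  also have "\<dots> \<le> (\<Sum>k\<in>K. \<delta>\<^sup>2 * real (card D))"
    using card_defects_le[OF assms(1,2) \<phi>] by (rule sum_mono)
  finally show ?thesis
    by simp
qed

lemma sep_number_sofic_maps_forbidden_le:
  fixes \<sigma> :: "'m::monoid_mult \<Rightarrow> 'v \<Rightarrow> 'v"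
  assumes "finite D" "D \<noteq> {}" "finite A" "X \<subseteq> full_shift A" "finite K" "p \<in> K \<rightarrow>\<^sub>E A"
    and forbidden: "\<forall>x\<in>X. restrict x K \<noteq> p" and into: "\<And>m. \<sigma> m ` D \<subseteq> D"
    and windows: "W \<subseteq> D" "\<And>w. w \<in> W \<Longrightarrow> inj_on (\<lambda>k. \<sigma> k w) K"
      "disjoint_family_on (\<lambda>w. (\<lambda>k. \<sigma> k w) ` K) W"
    and "\<epsilon> > 0"
  shows "sep_number (rhoinf rho0 D) \<epsilon> (sofic_maps X D \<sigma> K \<delta>)
    \<le> ereal (real (card A) ^ card D * 2 powr (real (card K) * \<delta>\<^sup>2 * real (card D))
        * (1 - 1 / (2 * real (card A) ^ card K)) ^ card W)"
proof -
  define r where "r = real (card K) * \<delta>\<^sup>2 * real (card D)"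
  define T where "T = {\<omega> \<in> D \<rightarrow>\<^sub>E A. real (card {w\<in>W. (\<lambda>k\<in>K. \<omega> (\<sigma> k w)) = p}) \<le> r}"
  have "restrict (\<lambda>v. \<phi> v 1) D \<in> T" if "\<phi> \<in> sofic_maps X D \<sigma> K \<delta>" for \<phi>
    using coordinates_sofic_maps_in_PiE[OF assms(4) that]
      card_pattern_hits_le[OF assms(1,2,5) windows(1) into forbidden that]
    by (simp add: T_def r_def)
  then have "sep_number (rhoinf rho0 D) \<epsilon> (sofic_maps X D \<sigma> K \<delta>) \<le> ereal (real (card T))"
    using assms by (intro sep_number_le_card_coordinates) (auto simp: T_def finite_PiE)
  also have "real (card T) \<le> real (card A) ^ card D * (1 / (1 / 2)) powr r
      * (1 - (1 - 1 / 2) / real (card A) ^ card K) ^ card W"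
    unfolding T_def using assms into by (intro card_PiE_few_pattern_hits_le) (auto simp: image_subset_iff)
  finally show ?thesis
    by (simp add: r_def)
qed

lemma ln_power_product_div_le:
  fixes a q r c :: real and n w d :: nat
  assumes "n > 0" "a > 0" "0 < q" "q < 1" "n \<le> 2 * (d + 1) * w" "r \<le> c * real n"
  shows "ln (a ^ n * 2 powr r * q ^ w) / real n \<le> ln a + c * ln 2 + ln q / (2 * (real d + 1))"
proof -
  have "real n \<le> 2 * (real d + 1) * real w"
    using of_nat_mono[OF assms(5), where 'a = real] by (simp add: algebra_simps)
  then have "real n / (2 * (real d + 1)) \<le> real w"
    by (simp add: field_simps)
  then have "real w * ln q \<le> real n / (2 * (real d + 1)) * ln q"
    using assms(3,4) by (intro mult_right_mono_neg) auto
  moreover have "r * ln 2 \<le> c * real n * ln 2"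
    using assms(6) by (intro mult_right_mono) auto
  moreover have "ln (a ^ n * 2 powr r * q ^ w) = real n * ln a + r * ln 2 + real w * ln q"
    using assms(2,3) by (simp add: ln_mult ln_realpow ln_powr)
  ultimately have "ln (a ^ n * 2 powr r * q ^ w)
      \<le> real n * ln a + c * real n * ln 2 + real n / (2 * (real d + 1)) * ln q"
    by linarith
  also have "\<dots> = real n * (ln a + c * ln 2 + ln q / (2 * (real d + 1)))"
    by (simp add: algebra_simps)
  finally show ?thesis
    using assms(1) by (simp add: divide_le_eq mult.commute)
qed

lemma log_sep_rate_forbidden_le:
  fixes \<sigma> :: "'m::monoid_mult \<Rightarrow> 'v \<Rightarrow> 'v"
  assumes "finite D" "D \<noteq> {}" "finite A" "A \<noteq> {}" "X \<subseteq> full_shift A" "finite K"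
    "p \<in> K \<rightarrow>\<^sub>E A" "\<forall>x\<in>X. restrict x K \<noteq> p" "\<And>m. \<sigma> m ` D \<subseteq> D"
    "\<forall>k\<in>K. \<forall>v\<in>D. card {w\<in>D. \<sigma> k w = v} \<le> \<Delta>"
    "2 * card {v\<in>D. \<not> inj_on (\<lambda>k. \<sigma> k v) K} \<le> card D" "\<epsilon> > 0"
  shows "log_sep_rate D \<sigma> X K \<delta> \<epsilon> \<le> ereal (ln (real (card A)) + real (card K) * \<delta>\<^sup>2 * ln 2
    + ln (1 - 1 / (2 * real (card A) ^ card K)) / (2 * (real (card K * card K * \<Delta>) + 1)))"
proof -
  define a where "a = real (card A)"
  define q where "q = 1 - 1 / (2 * a ^ card K)"
  obtain W where windows: "W \<subseteq> D" "\<forall>w\<in>W. inj_on (\<lambda>k. \<sigma> k w) K"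
      "disjoint_family_on (\<lambda>w. (\<lambda>k. \<sigma> k w) ` K) W"
    and card_W: "card D \<le> 2 * (card K * card K * \<Delta> + 1) * card W"
    using exists_disjoint_injective_windows[OF assms(1,6,9-11)] by blast
  define R where "R = a ^ card D * 2 powr (real (card K) * \<delta>\<^sup>2 * real (card D)) * q ^ card W"
  have "a \<ge> 1"
    using assms(3,4) by (simp add: a_def Suc_le_eq card_gt_0_iff)
  then have "a ^ card K \<ge> 1"
    by (rule one_le_power)
  then have "0 < q" "q < 1"
    by (simp_all add: q_def field_simps)
  then have "R > 0"
    using \<open>a \<ge> 1\<close> by (simp add: R_def)
  have "card D > 0"
    using assms(1,2) by (simp add: card_gt_0_iff)
  have "log_sep_rate D \<sigma> X K \<delta> \<epsilon> \<le> ereal (1 / real (card D)) * elog (ereal R)"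
    unfolding log_sep_rate_def R_def a_def q_def using assms windows
    by (intro ereal_mult_left_mono elog_mono sep_number_sofic_maps_forbidden_le) auto
  also have "\<dots> = ereal (ln R / real (card D))"
    using \<open>R > 0\<close> by (simp add: elog_ereal_pos)
  also have "ln R / real (card D) \<le> ln a + real (card K) * \<delta>\<^sup>2 * ln 2
      + ln q / (2 * (real (card K * card K * \<Delta>) + 1))"
    unfolding R_def using \<open>card D > 0\<close> \<open>a \<ge> 1\<close> \<open>0 < q\<close> \<open>q < 1\<close> card_W
    by (intro ln_power_product_div_le) auto
  finally show ?thesis
    by (simp add: a_def q_def)
qed

lemma sofic_entropy_lt_of_forbidden_pattern:
  assumes ssa: "strong_sofic_approx le D \<sigma>" and "finite A" "A \<noteq> {}" "X \<subseteq> full_shift A"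
    and "finite K" "p \<in> K \<rightarrow>\<^sub>E A" "\<forall>x\<in>X. restrict x K \<noteq> p"
  shows "sofic_entropy le D \<sigma> X < ereal (ln (real (card A)))"
proof -
  obtain \<Delta> where fibres: "\<forall>i. \<forall>k\<in>K. \<forall>v\<in>D i. card {w\<in>D i. \<sigma> i k w = v} \<le> \<Delta>"
    using strong_sofic_approxD(7)[OF ssa \<open>finite K\<close>] by blast
  define a where "a = real (card A)"
  define q where "q = 1 - 1 / (2 * a ^ card K)"
  define c where "c = - ln q / (2 * (real (card K * card K * \<Delta>) + 1))"
  \<comment> \<open>\<open>c\<close> is the gain per site from the forbidden pattern; \<open>\<delta>\<close> keeps the defect term below \<open>c / 2\<close>.\<close>
  define \<delta> where "\<delta> = sqrt (c / (2 * (real (card K) + 1)))"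
  have "a ^ card K \<ge> 1"
    using assms(2,3) by (simp add: a_def Suc_le_eq card_gt_0_iff)
  then have "0 < q" "q < 1"
    by (simp_all add: q_def field_simps)
  then have "c > 0"
    unfolding c_def by (intro divide_pos_pos) (simp_all del: of_nat_mult)
  then have "\<delta> > 0"
    by (simp add: \<delta>_def)
  have small: "real (card K) * \<delta>\<^sup>2 * ln 2 \<le> c / 2"
  proof -
    have "real (card K) * \<delta>\<^sup>2 \<le> c / 2"
      using \<open>c > 0\<close> by (simp add: \<delta>_def field_simps)
    moreover have "ln (2::real) \<le> 1"
      using ln_le_minus_one[of 2] by simp
    then have "real (card K) * \<delta>\<^sup>2 * ln 2 \<le> real (card K) * \<delta>\<^sup>2"
      by (intro mult_left_le) auto
    ultimately show ?thesis
      by linarith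
  qed
  have "sofic_entropy le D \<sigma> X \<le> ereal (ln a - c / 2)"
  proof (rule sofic_entropy_leI)
    fix \<epsilon> :: real
    assume "\<epsilon> > 0"
    have "\<forall>\<^sub>F i in net_filter le. log_sep_rate (D i) (\<sigma> i) X K \<delta> \<epsilon> \<le> ereal (ln a - c / 2)"
      using eventually_few_noninjective_windows[OF ssa \<open>finite K\<close>]
    proof (rule eventually_mono)
      fix i
      assume "2 * card {v\<in>D i. \<not> inj_on (\<lambda>k. \<sigma> i k v) K} \<le> card (D i)"
      then have "log_sep_rate (D i) (\<sigma> i) X K \<delta> \<epsilon> \<le> ereal (ln a + real (card K) * \<delta>\<^sup>2 * ln 2 - c)"
        using log_sep_rate_forbidden_le[of "D i" A X K p "\<sigma> i" \<Delta> \<epsilon> \<delta>] strong_sofic_approxD(2-4)[OF ssa]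
          assms fibres \<open>\<epsilon> > 0\<close>
        by (simp add: a_def c_def q_def)
      then show "log_sep_rate (D i) (\<sigma> i) X K \<delta> \<epsilon> \<le> ereal (ln a - c / 2)"
        using small by (simp add: order_trans)
    qed
    then show "\<exists>F \<delta>. finite F \<and> \<delta> > 0 \<and>
        (\<forall>\<^sub>F i in net_filter le. log_sep_rate (D i) (\<sigma> i) X F \<delta> \<epsilon> \<le> ereal (ln a - c / 2))"
      using \<open>finite K\<close> \<open>\<delta> > 0\<close> by blast
  qed
  then show ?thesis
    using \<open>c > 0\<close> by (simp add: a_def le_less_trans)
qed

theorem theorem5p3:
  fixes le :: "'i \<Rightarrow> 'i \<Rightarrow> bool"
    and D :: "'i \<Rightarrow> 'v set"
    and \<sigma> :: "'i \<Rightarrow> 'm::monoid_mult \<Rightarrow> 'v \<Rightarrow> 'v"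
    and A :: "'a set"
    and X :: "('m \<Rightarrow> 'a) set"
  assumes "infinite (UNIV :: 'm set)"
    and "strong_sofic_approx le D \<sigma>"
    and "finite A"
    and "subshift A X"
  shows "sofic_entropy le D \<sigma> X \<le> elog (ereal (real (card A)))
    \<and> (sofic_entropy le D \<sigma> X = elog (ereal (real (card A))) \<longleftrightarrow> X = full_shift A)"
proof -
  have X: "X \<subseteq> full_shift A" "closedin (prodiscrete A) X"
    using assms(4) by (simp_all add: subshift_def)
  have upper: "sofic_entropy le D \<sigma> X \<le> elog (ereal (real (card A)))"
    using sofic_entropy_le_elog_card[OF assms(2,3) X(1)] .
  have "sofic_entropy le D \<sigma> X < elog (ereal (real (card A)))" if proper: "X \<noteq> full_shift A"
  proof -
    obtain x0 where "x0 \<in> full_shift A" "x0 \<notin> X"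
      using X(1) proper by blast
    moreover from this obtain K where "finite K" "\<forall>x\<in>X. restrict x K \<noteq> restrict x0 K"
      using exists_forbidden_pattern[OF X(2,1)] by blast
    moreover have "A \<noteq> {}"
      using \<open>x0 \<in> full_shift A\<close> by (auto simp: full_shift_def)
    ultimately show ?thesis
      using sofic_entropy_lt_of_forbidden_pattern[OF assms(2,3) _ X(1), of K "restrict x0 K"]
      by (auto simp: full_shift_def elog_ereal_pos card_gt_0_iff assms(3))
  qed
  then show ?thesis
    using upper elog_card_le_sofic_entropy_full_shift[OF assms(2,3)] by force
qed

end
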